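(* Let $C_{n,1}$ be the number of comparisons made by Quickselect to find the smallest element of a list of $n$ distinct numbers, and let $W_{n,1}=\frac{1}{n}C_{n,1}-1$. Let $D$ have the standard Dickman distribution. Then for all $n\ge 1$, $$d_1(W_{n,1},D)\le \frac{8\log(n/2)+10}{n}.$$
   Context: Quickselect (to find the $m$-th smallest element of a list of $n\ge m$ distinct numbers): a pivot is chosen uniformly at random from the list and compared with each of the other $n-1$ elements; the elements smaller than the pivot form the left sublist and those larger form the right sublist. If the left sublist has size $m-1$, the pivot is the answer and the procedure stops; if it has size $\ge m$, the procedure recurses on the left sublist to find its $m$-th smallest element; otherwise (left size $L<m-1$) it recurses on the right sublist to find its $(m-L-1)$-th smallest element. All pivot choices are independent. $C_{n,m}$ denotes the total number of comparisons made (a random variable whose law depends only on $n,m$). The standard Dickman distribution is the unique law of a non-negative random variable $D$ satisfying $D=_d U(D+1)$, where $U\sim\mathcal U[0,1]$ is independent of $D$. The Wasserstein distance is $d_1(X,Y)=\sup_{h\in \mathrm{Lip}_1}|Eh(X)-Eh(Y)|$, where $\mathrm{Lip}_1=\{h:|h(y)-h(x)|\le|y-x|\}$. *)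

theory Defs
  imports "HOL-Probability.Probability"
begin

text \<open>Law of the number of comparisons C(n,m) made by Quickselect on n distinct numbers
  when searching for the m-th smallest. The pivot's left-sublist size L is uniform on
  {0..<n}; the pivot is compared with the n-1 other elements.\<close>

function quickselect_cmp :: "nat \<Rightarrow> nat \<Rightarrow> nat pmf" where
  "quickselect_cmp n m =
     (if n = 0 then return_pmf 0
      else pmf_of_set {0..<n} \<bind> (\<lambda>L.
        if L = m - 1 then return_pmf (n - 1)
        else if L \<ge> m then map_pmf (\<lambda>c. (n - 1) + c) (quickselect_cmp L m)
        else map_pmf (\<lambda>c. (n - 1) + c) (quickselect_cmp (n - L - 1) (m - L - 1))))"
  by pat_completeness auto
termination
  by (relation "Wellfounded.measure fst") (auto simp: set_pmf_of_set)

definition W_law :: "nat \<Rightarrow> real measure" where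
  "W_law n = distr (measure_pmf (quickselect_cmp n 1)) borel (\<lambda>c. real c / real n - 1)"

definition dickman_law :: "real measure \<Rightarrow> bool" where
  "dickman_law M \<longleftrightarrow> prob_space M \<and> sets M = sets borel \<and> (AE x in M. x \<ge> 0) \<and>
     distr (M \<Otimes>\<^sub>M uniform_measure lborel {0..1}) borel (\<lambda>(d, u). u * (d + 1)) = M"

definition wasserstein1 :: "real measure \<Rightarrow> real measure \<Rightarrow> ereal" where
  "wasserstein1 M N =
     (SUP h \<in> {h :: real \<Rightarrow> real. \<forall>x y. \<bar>h y - h x\<bar> \<le> \<bar>y - x\<bar>}.
        ereal \<bar>(\<integral>x. h x \<partial>M) - (\<integral>x. h x \<partial>N)\<bar>)"

end

theory Submission
  imports Defs
begin

text \<open>Conditioning on the size L of the left sublist, which is uniform on {0..<n}, gives the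
  distributional recursion W(n) = (L/n) (W(L) + 1) - 1/n. The Dickman equation D = U (D + 1) is its
  continuous counterpart: replacing U by the grid variable L/n costs at most E(D + 2)/n \<le> 4/n
  against a 1-Lipschitz test function h, because E D \<le> 2. Since x \<mapsto> h (L/n (x + 1) - 1/n) is
  (L/n)-Lipschitz, induction on n bounds the remaining error by
  (1/n^2) \<Sum>L=1..<n. (8 log(L/2) + 10), and comparing this sum with an integral of log closes the
  induction.\<close>

declare quickselect_cmp.simps[simp del]

lemma finite_set_pmf_quickselect_cmp: "finite (set_pmf (quickselect_cmp n m))"
proof (induction n m rule: quickselect_cmp.induct)
  case (1 n m)
  show ?case
    by (subst quickselect_cmp.simps)
       (use 1 in \<open>auto simp: set_pmf_of_set set_bind_pmf intro!: finite_UN_I\<close>)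
qed

lemma quickselect_cmp_min:
  assumes "n \<ge> 1"
  shows "quickselect_cmp n 1 =
    pmf_of_set {0..<n} \<bind> (\<lambda>L. map_pmf (\<lambda>c. n - 1 + c) (quickselect_cmp L 1))"
  using assms
  by (subst quickselect_cmp.simps)
     (auto intro!: bind_pmf_cong simp: set_pmf_of_set quickselect_cmp.simps[of 0])

lemma integral_quickselect_cmp_min:
  fixes g :: "nat \<Rightarrow> real"
  assumes "n \<ge> 1"
  shows "(\<integral>c. g c \<partial>quickselect_cmp n 1) =
    (\<Sum>L<n. \<integral>c. g (n - 1 + c) \<partial>quickselect_cmp L 1) / n"
  unfolding quickselect_cmp_min[OF assms]
  by (subst pmf_expectation_bind[where A="{0..<n}"])
     (use assms in \<open>auto simp: finite_set_pmf_quickselect_cmp set_pmf_of_set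
        lessThan_atLeast0 sum_divide_distrib\<close>)

lemma integral_W_law:
  fixes h :: "real \<Rightarrow> real"
  assumes "h \<in> borel_measurable borel"
  shows "(\<integral>x. h x \<partial>W_law n) = (\<integral>c. h (real c / n - 1) \<partial>quickselect_cmp n 1)"
  unfolding W_law_def using assms by (rule Bochner_Integration.integral_distr[rotated]) simp

lemma prob_space_W_law [simp]: "prob_space (W_law n)"
  unfolding W_law_def by (rule measure_pmf.prob_space_distr) simp

lemma integral_W_law_step:
  fixes h :: "real \<Rightarrow> real"
  assumes "n \<ge> 1" and [measurable]: "h \<in> borel_measurable borel"
  shows "(\<integral>x. h x \<partial>W_law n) =
    (\<Sum>L<n. \<integral>x. h (real L / real n * (x + 1) - 1 / real n) \<partial>W_law L) / n"
proof -
  have rescale: "(\<integral>c. h (real (n - 1 + c) / real n - 1) \<partial>quickselect_cmp L 1) =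
      (\<integral>x. h (real L / real n * (x + 1) - 1 / real n) \<partial>W_law L)" for L
  proof (cases "L = 0")
    case True
    \<comment> \<open>W_law 0 is the point mass at 0/0 - 1 = -1, so both sides equal h (-1/n).\<close>
    then show ?thesis
      using assms(1) by (simp add: integral_W_law quickselect_cmp.simps[of 0] of_nat_diff field_simps
          prob_space.prob_space[OF prob_space_W_law])
  next
    case False
    have "real L / n * (real c / L - 1 + 1) - 1 / n = real (n - 1 + c) / n - 1" for c
      using False assms(1) by (simp add: of_nat_diff field_simps)
    then show ?thesis
      by (subst integral_W_law) (auto intro: Bochner_Integration.integral_cong)
  qed
  show ?thesis
    by (simp only: integral_W_law[OF assms(2)] integral_quickselect_cmp_min[OF assms(1)] rescale)
qed

lemma lipschitz_on_UNIV_abs_le: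
  fixes h :: "real \<Rightarrow> real"
  assumes "C-lipschitz_on UNIV h"
  shows "\<bar>h x\<bar> \<le> \<bar>h 0\<bar> + C * \<bar>x\<bar>"
  using lipschitz_onD[OF assms, of x 0] by (simp add: dist_real_def)

lemma borel_measurable_lipschitz:
  fixes h :: "real \<Rightarrow> real"
  shows "C-lipschitz_on UNIV h \<Longrightarrow> h \<in> borel_measurable borel"
  by (intro borel_measurable_continuous_onI lipschitz_on_continuous_on)

lemma lipschitz_on_rescale:
  fixes h :: "real \<Rightarrow> real"
  assumes h: "C-lipschitz_on UNIV h" and "0 \<le> a"
  shows "(C * a)-lipschitz_on S (\<lambda>x. h (a * (x + 1) - b))"
proof (rule lipschitz_onI)
  fix x y
  have "dist (a * (x + 1) - b) (a * (y + 1) - b) = a * dist x y"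
    using \<open>0 \<le> a\<close> by (simp add: dist_real_def abs_mult flip: right_diff_distrib)
  then show "dist (h (a * (x + 1) - b)) (h (a * (y + 1) - b)) \<le> C * a * dist x y"
    using lipschitz_onD[OF h, of "a * (x + 1) - b" "a * (y + 1) - b"] by simp
qed (use lipschitz_on_nonneg[OF h] \<open>0 \<le> a\<close> in simp)

lemma integral_diff_le_lipschitz_const:
  fixes M N :: "real measure" and h :: "real \<Rightarrow> real"
  assumes bound: "\<And>g. 1-lipschitz_on UNIV g \<Longrightarrow> \<bar>(\<integral>x. g x \<partial>M) - (\<integral>x. g x \<partial>N)\<bar> \<le> e"
    and h: "C-lipschitz_on UNIV h" and "C > 0"
  shows "\<bar>(\<integral>x. h x \<partial>M) - (\<integral>x. h x \<partial>N)\<bar> \<le> C * e"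
proof -
  have "1-lipschitz_on UNIV (\<lambda>x. (1 / C) * h x)"
    using lipschitz_on_cmult_real_nonneg[OF h, of "1 / C"] \<open>C > 0\<close> by simp
  from bound[OF this] have "\<bar>(\<integral>x. h x \<partial>M) - (\<integral>x. h x \<partial>N)\<bar> / C \<le> e"
    using \<open>C > 0\<close> by (simp add: diff_divide_distrib[symmetric])
  then show ?thesis
    using \<open>C > 0\<close> by (simp add: field_simps)
qed

lemma integral_lipschitz_left_endpoint_error:
  fixes f :: "real \<Rightarrow> real"
  assumes f: "C-lipschitz_on {a..b} f" and "a \<le> b"
  shows "\<bar>integral {a..b} f - (b - a) * f a\<bar> \<le> C * (b - a)\<^sup>2"
proof -
  have "f integrable_on {a..b}"
    using lipschitz_on_continuous_on[OF f] by (rule integrable_continuous_interval)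
  then have "((\<lambda>u. f u - f a) has_integral (integral {a..b} f - (b - a) * f a)) {a..b}"
    using has_integral_const_real[of "f a" a b] \<open>a \<le> b\<close>
    by (auto intro!: has_integral_diff simp: mult.commute)
  moreover have "\<bar>f u - f a\<bar> \<le> C * (b - a)" if "u \<in> {a..b}" for u
  proof -
    have "\<bar>f u - f a\<bar> \<le> C * \<bar>u - a\<bar>"
      using lipschitz_onD[OF f that, of a] \<open>a \<le> b\<close> by (simp add: dist_real_def)
    also have "\<dots> \<le> C * (b - a)"
      using that lipschitz_on_nonneg[OF f] by (intro mult_left_mono) auto
    finally show ?thesis .
  qed
  ultimately have "norm (integral {a..b} f - (b - a) * f a)
      \<le> C * (b - a) * Henstock_Kurzweil_Integration.content (cbox a b)"
    using lipschitz_on_nonneg[OF f] \<open>a \<le> b\<close> by (intro has_integral_bound) auto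
  then show ?thesis
    using \<open>a \<le> b\<close> by (simp add: power2_eq_square mult.assoc)
qed

lemma left_riemann_sum_lipschitz_error:
  fixes f :: "real \<Rightarrow> real" and n :: nat
  assumes f: "C-lipschitz_on {0..1} f" and n: "n \<ge> 1"
  shows "\<bar>integral {0..1} f - (\<Sum>L<n. f (real L / n)) / n\<bar> \<le> C / n"
proof -
  have "\<bar>integral {0..k / n} f - (\<Sum>L<k. f (real L / n)) / n\<bar> \<le> k * C / n\<^sup>2"
    if "k \<le> n" for k :: nat
    using that
  proof (induction k)
    case 0
    then show ?case by simp
  next
    case (Suc k)
    have le: "0 \<le> real k / n" "real k / n \<le> Suc k / n" "Suc k / n \<le> 1"
      using Suc.prems by (auto simp: divide_right_mono)
    have piece: "\<bar>integral {k / n..Suc k / n} f - f (k / n) / n\<bar> \<le> C / n\<^sup>2"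
    proof -
      have "C-lipschitz_on {k / n..Suc k / n} f"
        using le by (intro lipschitz_on_subset[OF f]) auto
      from integral_lipschitz_left_endpoint_error[OF this le(2)]
      show ?thesis by (simp add: diff_divide_distrib[symmetric] power_divide)
    qed
    have "integral {0..k / n} f + integral {k / n..Suc k / n} f = integral {0..Suc k / n} f"
    proof (rule Henstock_Kurzweil_Integration.integral_combine[OF le(1,2)])
      show "f integrable_on {0..Suc k / n}"
        using le by (intro integrable_continuous_interval
            continuous_on_subset[OF lipschitz_on_continuous_on[OF f]]) auto
    qed
    moreover have "(\<Sum>L<Suc k. f (real L / n)) / n = (\<Sum>L<k. f (real L / n)) / n + f (k / n) / n"
      by (simp add: add_divide_distrib)
    moreover have "real (Suc k) * C / n\<^sup>2 = k * C / n\<^sup>2 + C / n\<^sup>2"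
      by (simp add: add_divide_distrib distrib_right)
    ultimately show ?case
      using Suc piece by linarith
  qed
  from this[of n] show ?thesis
    using n by (simp add: power2_eq_square)
qed

lemma grid_sum_lipschitz_error:
  fixes h :: "real \<Rightarrow> real" and n :: nat
  assumes h: "1-lipschitz_on UNIV h" and n: "n \<ge> 1" and "0 \<le> d"
  shows "\<bar>integral {0..1} (\<lambda>u. h (u * (d + 1))) - (\<Sum>L<n. h (real L / n * (d + 1) - 1 / n)) / n\<bar>
    \<le> (d + 2) / n"
proof -
  have dist_h: "\<bar>h x - h y\<bar> \<le> \<bar>x - y\<bar>" for x y
    using lipschitz_onD[OF h, of x y] by (simp add: dist_real_def)
  have lip: "(d + 1)-lipschitz_on {0..1} (\<lambda>u. h (u * (d + 1)))"
  proof (rule lipschitz_onI)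
    fix x y :: real
    have "x * (d + 1) - y * (d + 1) = (d + 1) * (x - y)"
      by (simp add: algebra_simps)
    then have "\<bar>x * (d + 1) - y * (d + 1)\<bar> = (d + 1) * \<bar>x - y\<bar>"
      using \<open>0 \<le> d\<close> by (simp add: abs_mult)
    then show "dist (h (x * (d + 1))) (h (y * (d + 1))) \<le> (d + 1) * dist x y"
      using dist_h[of "x * (d + 1)" "y * (d + 1)"] by (simp add: dist_real_def)
  qed (use \<open>0 \<le> d\<close> in simp)
  have "\<bar>integral {0..1} (\<lambda>u. h (u * (d + 1))) - (\<Sum>L<n. h (real L / n * (d + 1))) / n\<bar>
      \<le> (d + 1) / n"
    using left_riemann_sum_lipschitz_error[OF lip n] by simp
  moreover have "\<bar>(\<Sum>L<n. h (real L / n * (d + 1))) - (\<Sum>L<n. h (real L / n * (d + 1) - 1 / n))\<bar>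
      \<le> (\<Sum>L<n. 1 / n)"
    unfolding sum_subtractf[symmetric]
  proof (rule order.trans[OF sum_abs sum_mono])
    fix L
    show "\<bar>h (real L / n * (d + 1)) - h (real L / n * (d + 1) - 1 / n)\<bar> \<le> 1 / n"
      using dist_h[of "real L / n * (d + 1)" "real L / n * (d + 1) - 1 / n"] by simp
  qed
  then have "\<bar>(\<Sum>L<n. h (real L / n * (d + 1))) / n - (\<Sum>L<n. h (real L / n * (d + 1) - 1 / n)) / n\<bar>
      \<le> 1 / n"
    using n by (simp add: diff_divide_distrib[symmetric] divide_right_mono)
  ultimately show ?thesis
    by (simp add: add_divide_distrib)
qed

lemma sum_ln_half_le:
  assumes "n \<ge> 1"
  shows "(\<Sum>L=1..<n. 8 * ln (real L / 2) + 10) \<le> real n * (8 * ln (real n / 2) + 6)"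
  using assms
proof (induction n rule: nat_induct_at_least)
  case base
  then show ?case
    using ln2_le_25_over_36 by (simp add: ln_div)
next
  case (Suc n)
  have "1 \<le> (real n + 1) * (ln (real n + 1) - ln (real n))"
    using ln_diff_le[of "real n" "real n + 1"] Suc.hyps
    by (simp add: field_simps)
  then show ?case
    using Suc by (simp add: ln_div algebra_simps)
qed

lemma sum_abs_le_ln_half:
  fixes e :: "nat \<Rightarrow> real"
  assumes n: "n \<ge> 1" and "e 0 = 0"
    and e: "\<And>L. 1 \<le> L \<Longrightarrow> L < n \<Longrightarrow> \<bar>e L\<bar> \<le> (8 * ln (real L / 2) + 10) / n"
  shows "\<bar>\<Sum>L<n. e L\<bar> \<le> 8 * ln (real n / 2) + 6"
proof -
  have "(\<Sum>L<n. e L) = (\<Sum>L=1..<n. e L)"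
    using assms(1,2) by (simp add: lessThan_atLeast0 sum.atLeast_Suc_lessThan)
  also have "\<bar>\<dots>\<bar> \<le> (\<Sum>L=1..<n. \<bar>e L\<bar>)"
    by (rule sum_abs)
  also have "\<dots> \<le> (\<Sum>L=1..<n. (8 * ln (real L / 2) + 10) / n)"
    using e by (intro sum_mono) auto
  also have "\<dots> \<le> 8 * ln (real n / 2) + 6"
    using sum_ln_half_le[OF n] n by (simp add: sum_divide_distrib[symmetric] field_simps)
  finally show ?thesis .
qed

abbreviation uniform01 :: "real measure" where
  "uniform01 \<equiv> uniform_measure lborel {0..1}"

interpretation uniform01: prob_space uniform01
  by (rule prob_space_uniform_measure) auto

lemma AE_uniform01: "AE u in uniform01. 0 \<le> u \<and> u \<le> 1"
  by (rule AE_uniform_measureI) auto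

lemma integral_uniform01:
  fixes f :: "real \<Rightarrow> real"
  assumes "continuous_on UNIV f"
  shows "(\<integral>u. f u \<partial>uniform01) = integral {0..1} f"
proof -
  have [measurable]: "f \<in> borel_measurable borel"
    using assms by (rule borel_measurable_continuous_onI)
  have "uniform01 = density lborel (\<lambda>u. ennreal (indicator {0..1} u))"
    unfolding uniform_measure_def by (intro density_cong) (auto split: split_indicator)
  then have "(\<integral>u. f u \<partial>uniform01) = (\<integral>u. indicator {0..1} u *\<^sub>R f u \<partial>lborel)"
    by (simp only:) (rule integral_density; simp)
  also have "\<dots> = integral {0..1} f"
    unfolding set_lebesgue_integral_def[symmetric] set_integrable_def[symmetric]
    by (intro set_borel_integral_eq_integral[unfolded set_integrable_def] borel_integrable_compact
        continuous_on_subset[OF assms]) auto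
  finally show ?thesis .
qed

lemma integral_uniform01_id: "(\<integral>u. u \<partial>uniform01) = 1 / 2"
  using integral_uniform01[of "\<lambda>u. u"] by (simp add: power2_eq_square)

lemma integral_uniform01_clamp_le:
  fixes d K :: real
  assumes "0 \<le> d" and "0 \<le> K"
  shows "(\<integral>u. max 0 (min (u * (d + 1)) K) \<partial>uniform01) \<le> min ((d + 1) / 2) K"
proof -
  have clamp_int: "integrable uniform01 (\<lambda>u. max 0 (min (u * (d + 1)) K))"
    using assms by (intro uniform01.integrable_const_bound[where B=K]) auto
  have "AE u in uniform01. norm (u * (d + 1)) \<le> d + 1"
    using AE_uniform01
    by eventually_elim (use assms in \<open>auto simp: abs_mult intro!: mult_left_le_one_le\<close>)
  then have "integrable uniform01 (\<lambda>u. u * (d + 1))"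
    by (intro uniform01.integrable_const_bound) auto
  then have "(\<integral>u. max 0 (min (u * (d + 1)) K) \<partial>uniform01) \<le> (\<integral>u. u * (d + 1) \<partial>uniform01)"
    using AE_uniform01 assms
    by (intro integral_mono_AE clamp_int) (auto elim!: eventually_mono)
  moreover have "(\<integral>u. max 0 (min (u * (d + 1)) K) \<partial>uniform01) \<le> (\<integral>u. K \<partial>uniform01)"
    using assms by (intro integral_mono clamp_int) auto
  ultimately show ?thesis
    by (simp add: integral_uniform01_id)
qed

locale dickman_distribution =
  fixes D :: "real measure"
  assumes dickman_law: "dickman_law D"
begin

sublocale prob_space D
  using dickman_law by (simp add: dickman_law_def)

lemma sets_D [measurable_cong]: "sets D = sets borel"
  using dickman_law by (simp add: dickman_law_def)

lemma AE_nonneg: "AE x in D. 0 \<le> x"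
  using dickman_law by (simp add: dickman_law_def)

sublocale D_uniform01: pair_prob_space D uniform01
  by (intro pair_prob_space.intro pair_sigma_finite.intro prob_space_axioms uniform01.prob_space_axioms
      prob_space_imp_sigma_finite)

lemma integral_fixed_point:
  fixes f :: "real \<Rightarrow> real"
  assumes [measurable]: "f \<in> borel_measurable borel"
    and int: "integrable (D \<Otimes>\<^sub>M uniform01) (\<lambda>(d, u). f (u * (d + 1)))"
  shows "(\<integral>x. f x \<partial>D) = (\<integral>d. (\<integral>u. f (u * (d + 1)) \<partial>uniform01) \<partial>D)"
proof -
  have "(\<integral>x. f x \<partial>D) = (\<integral>x. f x \<partial>distr (D \<Otimes>\<^sub>M uniform01) borel (\<lambda>(d, u). u * (d + 1)))"
    using dickman_law by (simp add: dickman_law_def)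
  also have "\<dots> = (\<integral>p. f ((\<lambda>(d, u). u * (d + 1)) p) \<partial>(D \<Otimes>\<^sub>M uniform01))"
    by (rule integral_distr) measurable
  also have "\<dots> = (\<integral>d. (\<integral>u. f (u * (d + 1)) \<partial>uniform01) \<partial>D)"
    using D_uniform01.integral_fst'[OF int[unfolded case_prod_beta']]
    by (simp add: case_prod_beta')
  finally show ?thesis .
qed

lemma integrable_fixed_point_bounded:
  fixes f :: "real \<Rightarrow> real"
  assumes [measurable]: "f \<in> borel_measurable borel" and "\<And>x. \<bar>f x\<bar> \<le> B"
  shows "integrable (D \<Otimes>\<^sub>M uniform01) (\<lambda>(d, u). f (u * (d + 1)))"
  using assms(2) by (intro D_uniform01.P.integrable_const_bound[where B=B]) auto

text \<open>The truncation keeps every integral finite. The fixed-point equation applied to the clamp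
  f gives E H \<le> E f \<le> E G, and d 1(d \<le> k) \<le> 2 (H d - G d) + 2 pointwise.\<close>

lemma truncated_mean_le: "(\<integral>d. d * indicator {..real k} d \<partial>D) \<le> 2"
proof -
  define K where "K = real k + 1"
  define f where "f x = max 0 (min x K)" for x
  define H where "H d = min d (real k)" for d
  define G where "G d = min ((d + 1) / 2) K" for d
  have [measurable]: "f \<in> borel_measurable borel" "H \<in> borel_measurable borel"
    "G \<in> borel_measurable borel"
    unfolding f_def H_def G_def by measurable
  have f_bound: "\<bar>f x\<bar> \<le> K" for x
    unfolding f_def K_def by auto
  have bounded: "integrable D g" if [measurable]: "g \<in> borel_measurable borel"
    and "\<And>d. 0 \<le> d \<Longrightarrow> \<bar>g d\<bar> \<le> K" for g
    using AE_nonneg that(2) by (intro integrable_const_bound[where B=K]) auto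
  have int: "integrable D f" "integrable D H" "integrable D G"
    "integrable D (\<lambda>d. d * indicator {..real k} d)"
    by (auto intro!: bounded simp: f_bound) (auto simp: H_def G_def K_def split: split_indicator)
  have f_fixed_point_int: "integrable (D \<Otimes>\<^sub>M uniform01) (\<lambda>(d, u). f (u * (d + 1)))"
    by (rule integrable_fixed_point_bounded[OF _ f_bound]) measurable
  have "(\<integral>d. H d \<partial>D) \<le> (\<integral>x. f x \<partial>D)"
    by (rule integral_mono[OF int(2,1)]) (auto simp: H_def f_def K_def)
  also have "\<dots> = (\<integral>d. (\<integral>u. f (u * (d + 1)) \<partial>uniform01) \<partial>D)"
    by (rule integral_fixed_point[OF _ f_fixed_point_int]) measurable
  also have "\<dots> \<le> (\<integral>d. G d \<partial>D)"
  proof (rule integral_mono_AE[OF _ int(3)])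
    show "integrable D (\<lambda>d. \<integral>u. f (u * (d + 1)) \<partial>uniform01)"
      using D_uniform01.integrable_fst'[OF f_fixed_point_int[unfolded case_prod_beta']] by simp
    show "AE d in D. (\<integral>u. f (u * (d + 1)) \<partial>uniform01) \<le> G d"
      using AE_nonneg unfolding f_def G_def K_def
      by eventually_elim (rule integral_uniform01_clamp_le; simp)
  qed
  finally have HG: "(\<integral>d. H d \<partial>D) \<le> (\<integral>d. G d \<partial>D)" .
  have "(\<integral>d. d * indicator {..real k} d \<partial>D) \<le> (\<integral>d. 2 * (H d - G d) + 2 \<partial>D)"
  proof (rule integral_mono[OF int(4)])
    show "integrable D (\<lambda>d. 2 * (H d - G d) + 2)"
      using int by simp
  qed (auto simp: H_def G_def K_def min_def field_simps split: split_indicator)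
  also have "\<dots> = 2 * ((\<integral>d. H d \<partial>D) - (\<integral>d. G d \<partial>D)) + 2"
    using int by (simp add: prob_space)
  also have "\<dots> \<le> 2"
    using HG by simp
  finally show ?thesis .
qed

lemma integrable_id: "integrable D (\<lambda>x. x)"
  and mean_le: "(\<integral>x. x \<partial>D) \<le> 2"
proof -
  define trunc where "trunc k d = d * indicator {..real k} d" for k :: nat and d :: real
  have trunc_int: "integrable D (trunc k)" for k
    unfolding trunc_def using AE_nonneg
    by (intro integrable_const_bound[where B="real k"])
       (auto elim!: eventually_mono split: split_indicator)
  have trunc_mono: "AE d in D. mono (\<lambda>k. trunc k d)"
    using AE_nonneg by eventually_elim (auto simp: trunc_def mono_def split: split_indicator)
  have trunc_lim: "AE d in D. (\<lambda>k. trunc k d) \<longlonglongrightarrow> d"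
  proof (rule AE_I2)
    fix d :: real
    have "eventually (\<lambda>k. trunc k d = d) sequentially"
      using real_nat_ceiling_ge[of d] by (intro eventually_sequentiallyI[of "nat \<lceil>d\<rceil>"])
        (auto simp: trunc_def split: split_indicator)
    then show "(\<lambda>k. trunc k d) \<longlonglongrightarrow> d"
      by (rule tendsto_eventually)
  qed
  obtain m where m: "(\<lambda>k. \<integral>d. trunc k d \<partial>D) \<longlonglongrightarrow> m" "m \<le> 2"
  proof (rule incseq_convergent)
    show "incseq (\<lambda>k. \<integral>d. trunc k d \<partial>D)"
      using trunc_mono by (auto intro!: integral_mono_AE trunc_int simp: incseq_def mono_def
          elim!: eventually_mono)
    show "\<forall>k. (\<integral>d. trunc k d \<partial>D) \<le> 2"
      unfolding trunc_def using truncated_mean_le by blast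
  next
    fix L assume "(\<lambda>k. \<integral>d. trunc k d \<partial>D) \<longlonglongrightarrow> L"
    moreover from this have "L \<le> 2"
      using truncated_mean_le by (intro LIMSEQ_le_const2) (auto simp: trunc_def)
    ultimately show thesis using that by blast
  qed
  show "integrable D (\<lambda>x. x)"
    by (rule integrable_monotone_convergence[OF trunc_int trunc_mono trunc_lim m(1)]) measurable
  have "(\<integral>x. x \<partial>D) = m"
    by (rule integral_monotone_convergence[OF trunc_int trunc_mono trunc_lim m(1)]) measurable
  with m(2) show "(\<integral>x. x \<partial>D) \<le> 2"
    by simp
qed

lemma integrable_lipschitz:
  fixes h :: "real \<Rightarrow> real"
  assumes h: "C-lipschitz_on UNIV h"
  shows "integrable D h"
proof (rule Bochner_Integration.integrable_bound)
  show "integrable D (\<lambda>x. \<bar>h 0\<bar> + C * \<bar>x\<bar>)"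
    using integrable_id by auto
  show "h \<in> borel_measurable D"
    using borel_measurable_lipschitz[OF h] by measurable
  show "AE x in D. norm (h x) \<le> norm (\<bar>h 0\<bar> + C * \<bar>x\<bar>)"
    using lipschitz_on_UNIV_abs_le[OF h] by (auto intro: order_trans[OF _ abs_ge_self])
qed

lemma integrable_fixed_point_lipschitz:
  fixes h :: "real \<Rightarrow> real"
  assumes h: "C-lipschitz_on UNIV h"
  shows "integrable (D \<Otimes>\<^sub>M uniform01) (\<lambda>(d, u). h (u * (d + 1)))"
proof (rule Bochner_Integration.integrable_bound)
  have [measurable]: "h \<in> borel_measurable borel"
    using borel_measurable_lipschitz[OF h] .
  have "integrable (distr (D \<Otimes>\<^sub>M uniform01) D fst) (\<lambda>d. \<bar>h 0\<bar> + C * (\<bar>d\<bar> + 1))"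
    unfolding uniform01.distr_pair_fst using integrable_id by auto
  then show "integrable (D \<Otimes>\<^sub>M uniform01) (\<lambda>(d, u). \<bar>h 0\<bar> + C * (\<bar>d\<bar> + 1))"
    by (subst (asm) integrable_distr_eq) (auto simp: case_prod_beta')
  have "AE p in D \<Otimes>\<^sub>M uniform01. 0 \<le> snd p \<and> snd p \<le> 1"
  proof (rule D_uniform01.AE_pair_measure)
    show "{p \<in> space (D \<Otimes>\<^sub>M uniform01). 0 \<le> snd p \<and> snd p \<le> 1} \<in> sets (D \<Otimes>\<^sub>M uniform01)"
      by measurable
  qed (use AE_uniform01 in simp)
  then show "AE p in D \<Otimes>\<^sub>M uniform01.
      norm ((\<lambda>(d, u). h (u * (d + 1))) p) \<le> norm ((\<lambda>(d, u). \<bar>h 0\<bar> + C * (\<bar>d\<bar> + 1)) p)"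
  proof eventually_elim
    case (elim p)
    obtain d u where p: "p = (d, u)" by fastforce
    have "\<bar>u * (d + 1)\<bar> \<le> \<bar>d + 1\<bar>"
      using elim p by (auto simp: abs_mult intro!: mult_left_le_one_le)
    also have "\<dots> \<le> \<bar>d\<bar> + 1"
      by linarith
    finally have "C * \<bar>u * (d + 1)\<bar> \<le> C * (\<bar>d\<bar> + 1)"
      using lipschitz_on_nonneg[OF h] by (rule mult_left_mono)
    then show ?case
      using lipschitz_on_UNIV_abs_le[OF h, of "u * (d + 1)"] p by auto
  qed
qed (use borel_measurable_lipschitz[OF h] in measurable)

lemma riemann_sum_error:
  fixes h :: "real \<Rightarrow> real" and n :: nat
  assumes h: "1-lipschitz_on UNIV h" and n: "n \<ge> 1"
  shows "\<bar>(\<integral>x. h x \<partial>D) - (\<Sum>L<n. \<integral>d. h (real L / n * (d + 1) - 1 / n) \<partial>D) / n\<bar> \<le> 4 / n"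
proof -
  have [measurable]: "h \<in> borel_measurable borel"
    using borel_measurable_lipschitz[OF h] .
  define F where "F d = (\<integral>u. h (u * (d + 1)) \<partial>uniform01)" for d
  define S where "S d = (\<Sum>L<n. h (real L / n * (d + 1) - 1 / n)) / n" for d
  have pointwise: "\<bar>F d - S d\<bar> \<le> (d + 2) / n" if "0 \<le> d" for d
  proof -
    have "F d = integral {0..1} (\<lambda>u. h (u * (d + 1)))"
      unfolding F_def
      by (intro integral_uniform01 continuous_on_compose2[OF lipschitz_on_continuous_on[OF h]])
         (auto intro!: continuous_intros)
    then show ?thesis
      unfolding S_def using grid_sum_lipschitz_error[OF h n that] by simp
  qed
  have "(\<integral>x. h x \<partial>D) = (\<integral>d. F d \<partial>D)"
    unfolding F_def by (rule integral_fixed_point[OF _ integrable_fixed_point_lipschitz[OF h]]) simp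
  moreover have term_int: "integrable D (\<lambda>d. h (real L / n * (d + 1) - 1 / n))" for L
    by (rule integrable_lipschitz[OF lipschitz_on_rescale[OF h]]) simp
  then have S_int: "integrable D S"
    unfolding S_def by (intro integrable_divide Bochner_Integration.integrable_sum term_int)
  have "(\<Sum>L<n. \<integral>d. h (real L / n * (d + 1) - 1 / n) \<partial>D) / n = (\<integral>d. S d \<partial>D)"
    unfolding S_def integral_divide_zero by (subst Bochner_Integration.integral_sum) (use term_int in auto)
  moreover have "\<bar>(\<integral>d. F d \<partial>D) - (\<integral>d. S d \<partial>D)\<bar> \<le> 4 / n"
  proof -
    have F_int: "integrable D F"
      using D_uniform01.integrable_fst'[OF integrable_fixed_point_lipschitz[OF h]]
      unfolding F_def by (simp add: case_prod_beta')
    have "\<bar>(\<integral>d. F d \<partial>D) - (\<integral>d. S d \<partial>D)\<bar> \<le> (\<integral>d. \<bar>F d - S d\<bar> \<partial>D)"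
      using F_int S_int by (simp flip: Bochner_Integration.integral_diff)
    also have "\<dots> \<le> (\<integral>d. (d + 2) / n \<partial>D)"
      using AE_nonneg pointwise F_int S_int integrable_id
      by (intro integral_mono_AE) (auto elim!: eventually_mono)
    also have "\<dots> = ((\<integral>d. d \<partial>D) + 2) / n"
      using integrable_id by (simp add: prob_space)
    also have "\<dots> \<le> 4 / n"
      using mean_le by (simp add: divide_right_mono)
    finally show ?thesis .
  qed
  ultimately show ?thesis
    by simp
qed

lemma W_law_lipschitz_bound:
  fixes h :: "real \<Rightarrow> real" and n :: nat
  assumes "n \<ge> 1" and "1-lipschitz_on UNIV h"
  shows "\<bar>(\<integral>x. h x \<partial>W_law n) - (\<integral>x. h x \<partial>D)\<bar> \<le> (8 * ln (real n / 2) + 10) / n"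
  using assms
proof (induction n arbitrary: h rule: less_induct)
  case (less n)
  note n = less.prems(1) and h = less.prems(2)
  define g where "g L x = h (real L / n * (x + 1) - 1 / n)" for L x
  define err where "err L = (\<integral>x. g L x \<partial>W_law L) - (\<integral>x. g L x \<partial>D)" for L
  have err0: "err 0 = 0"
    using prob_space.prob_space[OF prob_space_W_law] by (simp add: err_def g_def prob_space)
  have err_le: "\<bar>err L\<bar> \<le> (8 * ln (real L / 2) + 10) / n" if "1 \<le> L" "L < n" for L
  proof -
    have "(real L / n)-lipschitz_on UNIV (g L)"
      unfolding g_def using lipschitz_on_rescale[OF h, of "real L / n"] by simp
    then have "\<bar>err L\<bar> \<le> real L / n * ((8 * ln (real L / 2) + 10) / L)"
      unfolding err_def using that
      by (intro integral_diff_le_lipschitz_const[where C="real L / n"] less.IH) auto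
    then show ?thesis
      using that by simp
  qed
  have sum_err: "\<bar>\<Sum>L<n. err L\<bar> / n \<le> (8 * ln (real n / 2) + 6) / n"
    using sum_abs_le_ln_half[OF n err0 err_le] by (simp add: divide_right_mono)
  have "(\<integral>x. h x \<partial>W_law n) - (\<integral>x. h x \<partial>D) =
      (\<Sum>L<n. err L) / n + ((\<Sum>L<n. \<integral>x. g L x \<partial>D) / n - (\<integral>x. h x \<partial>D))"
    using integral_W_law_step[OF n borel_measurable_lipschitz[OF h]]
    by (simp add: err_def g_def sum_subtractf diff_divide_distrib)
  then have "\<bar>(\<integral>x. h x \<partial>W_law n) - (\<integral>x. h x \<partial>D)\<bar> \<le>
      \<bar>\<Sum>L<n. err L\<bar> / n + \<bar>(\<integral>x. h x \<partial>D) - (\<Sum>L<n. \<integral>x. g L x \<partial>D) / n\<bar>"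
    by (metis abs_divide abs_minus_commute abs_of_nat abs_triangle_ineq)
  also have "\<dots> \<le> (8 * ln (real n / 2) + 6) / n + 4 / n"
    using sum_err riemann_sum_error[OF h n] unfolding g_def by (rule add_mono)
  finally show ?case
    by (simp add: add_divide_distrib)
qed

end

theorem theorem1p1:
  fixes n :: nat and D :: "real measure"
  assumes "n \<ge> 1" and "dickman_law D"
  shows "wasserstein1 (W_law n) D \<le> ereal ((8 * ln (real n / 2) + 10) / real n)"
proof -
  interpret dickman_distribution D
    using assms(2) by unfold_locales
  show ?thesis
    unfolding wasserstein1_def
    using W_law_lipschitz_bound[OF assms(1)]
    by (intro SUP_least) (simp add: lipschitz_on_def dist_real_def abs_minus_commute)
qed

end
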